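(* In any correlational scenario with finite setting and outcome sets, the set $\mathcal{DC}$ of deterministically consistent correlations is convex and equals the convex hull of the deterministic correlations it contains; in particular it is a convex polytope all of whose vertices are deterministic correlations.
   Context: Parties $S_1,\dots,S_N$ with finite setting sets $A_k$ and outcome sets $X_k$; a correlation is a conditional distribution $p(\vec x|\vec a)$; deterministic correlations are those of the form $\delta_{\vec x,f(\vec a)}$. For finite sets $I_k,O_k$, a conditional distribution $p(\vec i|\vec o)$ is a classical process if for all finite $A_k,X_k$ and all local interventions $p(x_k,o_k|a_k,i_k)$ the expression $\sum_{\vec i,\vec o}\prod_k p(x_k,o_k|a_k,i_k)p(\vec i|\vec o)$ is a valid conditional probability distribution over $\vec x$ for each $\vec a$. A process function is a function $\omega:\vec O\to\vec I$ with $\delta_{\vec i,\omega(\vec o)}$ a classical process. The deterministic-extrema polytope (for given $I_k,O_k$) is the convex hull of $\{\delta_{\vec i,\omega(\vec o)}\}$ over process functions $\omega$. A correlation is deterministically consistent if it equals $\sum_{\vec i,\vec o}\prod_k p(x_k,o_k|a_k,i_k)p(\vec i|\vec o)$ for some finite $I_k,O_k$, local interventions, and $p(\vec i|\vec o)$ in the deterministic-extrema polytope. *)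

theory Defs
  imports "HOL-Analysis.Analysis" "HOL-Library.Function_Algebras"
begin

instantiation "fun" :: (type, real_vector) real_vector
begin
definition scaleR_fun :: "real \<Rightarrow> ('a \<Rightarrow> 'b) \<Rightarrow> 'a \<Rightarrow> 'b" where
  "scaleR_fun r f = (\<lambda>x. r *\<^sub>R f x)"
instance
  by standard (simp_all add: scaleR_fun_def fun_eq_iff plus_fun_def scaleR_add_right scaleR_add_left)
end

text \<open>Parties are indexed by k < N. Tuples of settings/outcomes are extensional
  functions in PiE {..<N}. A correlation p(x|a) is represented as p a x, set to 0
  outside the set of valid tuples.\<close>

definition is_correlation ::
  "nat \<Rightarrow> (nat \<Rightarrow> 'a set) \<Rightarrow> (nat \<Rightarrow> 'x set) \<Rightarrow> ((nat \<Rightarrow> 'a) \<Rightarrow> (nat \<Rightarrow> 'x) \<Rightarrow> real) \<Rightarrow> bool" where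
  "is_correlation N A X p \<longleftrightarrow>
     (\<forall>a x. p a x \<noteq> 0 \<longrightarrow> a \<in> Pi\<^sub>E {..<N} A \<and> x \<in> Pi\<^sub>E {..<N} X) \<and>
     (\<forall>a \<in> Pi\<^sub>E {..<N} A. \<forall>x \<in> Pi\<^sub>E {..<N} X. 0 \<le> p a x) \<and>
     (\<forall>a \<in> Pi\<^sub>E {..<N} A. (\<Sum>x \<in> Pi\<^sub>E {..<N} X. p a x) = 1)"

definition deterministic_correlation ::
  "nat \<Rightarrow> (nat \<Rightarrow> 'a set) \<Rightarrow> (nat \<Rightarrow> 'x set) \<Rightarrow> ((nat \<Rightarrow> 'a) \<Rightarrow> (nat \<Rightarrow> 'x) \<Rightarrow> real) \<Rightarrow> bool" where
  "deterministic_correlation N A X p \<longleftrightarrow>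
     (\<exists>f. f \<in> Pi\<^sub>E {..<N} A \<rightarrow> Pi\<^sub>E {..<N} X \<and>
          p = (\<lambda>a x. if a \<in> Pi\<^sub>E {..<N} A \<and> x = f a then 1 else 0))"

text \<open>A local intervention p(x_k,o_k|a_k,i_k) of one party, written L a i x u.\<close>

definition local_intervention ::
  "'a set \<Rightarrow> 'i set \<Rightarrow> 'x set \<Rightarrow> 'o set \<Rightarrow> ('a \<Rightarrow> 'i \<Rightarrow> 'x \<Rightarrow> 'o \<Rightarrow> real) \<Rightarrow> bool" where
  "local_intervention A I X Q L \<longleftrightarrow>
     (\<forall>a \<in> A. \<forall>i \<in> I.
        (\<forall>x \<in> X. \<forall>u \<in> Q. 0 \<le> L a i x u) \<and>
        (\<Sum>(x, u) \<in> X \<times> Q. L a i x u) = 1)"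

text \<open>The correlation sum_{i,o} prod_k p(x_k,o_k|a_k,i_k) p(i|o); here P i u = p(i|o).\<close>

definition compose ::
  "nat \<Rightarrow> (nat \<Rightarrow> 'a set) \<Rightarrow> (nat \<Rightarrow> 'x set) \<Rightarrow> (nat \<Rightarrow> nat set) \<Rightarrow> (nat \<Rightarrow> nat set)
   \<Rightarrow> (nat \<Rightarrow> 'a \<Rightarrow> nat \<Rightarrow> 'x \<Rightarrow> nat \<Rightarrow> real) \<Rightarrow> ((nat \<Rightarrow> nat) \<Rightarrow> (nat \<Rightarrow> nat) \<Rightarrow> real)
   \<Rightarrow> (nat \<Rightarrow> 'a) \<Rightarrow> (nat \<Rightarrow> 'x) \<Rightarrow> real" where
  "compose N A X I Q L P = (\<lambda>a x.
     if a \<in> Pi\<^sub>E {..<N} A \<and> x \<in> Pi\<^sub>E {..<N} X then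
       (\<Sum>i \<in> Pi\<^sub>E {..<N} I. \<Sum>u \<in> Pi\<^sub>E {..<N} Q.
          (\<Prod>k<N. L k (a k) (i k) (x k) (u k)) * P i u)
     else 0)"

definition cond_dist_process ::
  "nat \<Rightarrow> (nat \<Rightarrow> nat set) \<Rightarrow> (nat \<Rightarrow> nat set) \<Rightarrow> ((nat \<Rightarrow> nat) \<Rightarrow> (nat \<Rightarrow> nat) \<Rightarrow> real) \<Rightarrow> bool" where
  "cond_dist_process N I Q P \<longleftrightarrow>
     (\<forall>u \<in> Pi\<^sub>E {..<N} Q.
        (\<forall>i \<in> Pi\<^sub>E {..<N} I. 0 \<le> P i u) \<and> (\<Sum>i \<in> Pi\<^sub>E {..<N} I. P i u) = 1)"

text \<open>The quantification over all finite setting/outcome sets of the auxiliary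
  parties is over finite sets of natural numbers (every finite set is in bijection
  with one of these).\<close>

definition classical_process ::
  "nat \<Rightarrow> (nat \<Rightarrow> nat set) \<Rightarrow> (nat \<Rightarrow> nat set) \<Rightarrow> ((nat \<Rightarrow> nat) \<Rightarrow> (nat \<Rightarrow> nat) \<Rightarrow> real) \<Rightarrow> bool" where
  "classical_process N I Q P \<longleftrightarrow>
     (\<forall>k<N. finite (I k) \<and> finite (Q k)) \<and>
     cond_dist_process N I Q P \<and>
     (\<forall>(A' :: nat \<Rightarrow> nat set) (X' :: nat \<Rightarrow> nat set) L.
        (\<forall>k<N. finite (A' k) \<and> finite (X' k)) \<longrightarrow>
        (\<forall>k<N. local_intervention (A' k) (I k) (X' k) (Q k) (L k)) \<longrightarrow>
        is_correlation N A' X' (compose N A' X' I Q L P))"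

definition delta_process ::
  "nat \<Rightarrow> (nat \<Rightarrow> nat set) \<Rightarrow> ((nat \<Rightarrow> nat) \<Rightarrow> (nat \<Rightarrow> nat)) \<Rightarrow> (nat \<Rightarrow> nat) \<Rightarrow> (nat \<Rightarrow> nat) \<Rightarrow> real" where
  "delta_process N Q \<omega> = (\<lambda>i u. if u \<in> Pi\<^sub>E {..<N} Q \<and> i = \<omega> u then 1 else 0)"

definition process_function ::
  "nat \<Rightarrow> (nat \<Rightarrow> nat set) \<Rightarrow> (nat \<Rightarrow> nat set) \<Rightarrow> ((nat \<Rightarrow> nat) \<Rightarrow> (nat \<Rightarrow> nat)) \<Rightarrow> bool" where
  "process_function N I Q \<omega> \<longleftrightarrow>
     \<omega> \<in> Pi\<^sub>E {..<N} Q \<rightarrow> Pi\<^sub>E {..<N} I \<and> classical_process N I Q (delta_process N Q \<omega>)"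

definition det_extrema_polytope ::
  "nat \<Rightarrow> (nat \<Rightarrow> nat set) \<Rightarrow> (nat \<Rightarrow> nat set) \<Rightarrow> ((nat \<Rightarrow> nat) \<Rightarrow> (nat \<Rightarrow> nat) \<Rightarrow> real) set" where
  "det_extrema_polytope N I Q =
     convex hull {delta_process N Q \<omega> | \<omega>. process_function N I Q \<omega>}"

definition DC ::
  "nat \<Rightarrow> (nat \<Rightarrow> 'a set) \<Rightarrow> (nat \<Rightarrow> 'x set) \<Rightarrow> ((nat \<Rightarrow> 'a) \<Rightarrow> (nat \<Rightarrow> 'x) \<Rightarrow> real) set" where
  "DC N A X = {p. is_correlation N A X p \<and>
     (\<exists>(I :: nat \<Rightarrow> nat set) (Q :: nat \<Rightarrow> nat set) L P.
        (\<forall>k<N. finite (I k) \<and> finite (Q k)) \<and>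
        (\<forall>k<N. local_intervention (A k) (I k) (X k) (Q k) (L k)) \<and>
        P \<in> det_extrema_polytope N I Q \<and>
        p = compose N A X I Q L P)}"

end

theory Submission
  imports Defs
begin

text \<open>Composition is linear in the process, and every local
  intervention is a convex combination of deterministic ones, so the correlation is a convex
  combination of correlations obtained from deterministic interventions and a single process
  function. Those take values in \<open>\<nat>\<close> and have row sums \<open>1\<close>, hence are deterministic; they
  lie in \<open>DC\<close>. Conversely \<open>DC\<close> is convex: two realisations are glued into one scenario
  by encoding the inputs and outputs of the first as even numbers and those of the second as odd
  numbers. Relabelled process functions are again process functions, so the glued processes
  stay in the deterministic-extrema polytope, and mixing them mixes the correlations. There are
  only finitely many deterministic correlations, so \<open>DC\<close> is a polytope and its extreme points
  are deterministic.\<close>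

lemma sum_fun_apply: "finite T \<Longrightarrow> (\<Sum>s\<in>T. f s) x = (\<Sum>s\<in>T. f s x)"
  by (induction T rule: finite_induct) (auto simp: plus_fun_def)

lemma sum_in_Nats: "(\<And>x. x \<in> S \<Longrightarrow> f x \<in> \<nat>) \<Longrightarrow> sum f S \<in> \<nat>"
  by (induction S rule: infinite_finite_induct) auto

lemma prod_in_Nats: "(\<And>x. x \<in> S \<Longrightarrow> f x \<in> \<nat>) \<Longrightarrow> prod f S \<in> \<nat>"
  by (induction S rule: infinite_finite_induct) auto

lemma Nats_ge_one: "(y::'a::linordered_semidom) \<in> \<nat> \<Longrightarrow> y \<noteq> 0 \<Longrightarrow> 1 \<le> y"
  by (auto elim!: Nats_cases)

lemma sum_Nats_eq_one_obtains_indicator: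
  fixes f :: "'a \<Rightarrow> real"
  assumes fin: "finite S" and nat: "\<forall>y\<in>S. f y \<in> \<nat>" and one: "sum f S = 1"
  obtains x where "x \<in> S" "\<forall>y\<in>S. f y = (if y = x then 1 else 0)"
proof -
  have nonneg: "0 \<le> f y" if "y \<in> S" for y
    using nat that by (auto elim!: Nats_cases)
  have "\<exists>x\<in>S. f x \<noteq> 0"
    using one by (metis sum.neutral zero_neq_one)
  then obtain x where x: "x \<in> S" "f x \<noteq> 0" by blast
  have "f x \<le> 1"
    using member_le_sum[of x S f] one fin x nonneg by auto
  then have fx: "f x = 1"
    using Nats_ge_one nat x by force
  have "f y = 0" if y: "y \<in> S" "y \<noteq> x" for y
  proof -
    have "f x + f y = (\<Sum>z\<in>{x, y}. f z)" using y by simp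
    also have "\<dots> \<le> 1"
      using sum_mono2[of S "{x, y}" f] one fin x y nonneg by auto
    finally show ?thesis using fx nonneg[OF y(1)] by simp
  qed
  then show ?thesis using that x fx by auto
qed

lemma sum_PiE_prod_indicator:
  assumes fS: "finite S" and fT: "finite T" and s0: "s0 \<in> S" and t0: "t0 \<in> T"
    and rows: "\<forall>s\<in>S. sum (h s) T = (1::real)"
  shows "(\<Sum>g\<in>Pi\<^sub>E S (\<lambda>_. T). (\<Prod>s\<in>S. h s (g s)) * (if g s0 = t0 then 1 else 0)) = h s0 t0"
proof -
  define h' where "h' s t = (if s = s0 then if t = t0 then h s t else 0 else h s t)" for s t
  have "(\<Prod>s\<in>S. h s (g s)) * (if g s0 = t0 then 1 else 0) = (\<Prod>s\<in>S. h' s (g s))" for g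
  proof -
    have "(\<Prod>s\<in>S - {s0}. h' s (g s)) = (\<Prod>s\<in>S - {s0}. h s (g s))"
      by (intro prod.cong) (auto simp: h'_def)
    then show ?thesis
      using fS s0 by (simp add: prod.remove h'_def)
  qed
  then have "(\<Sum>g\<in>Pi\<^sub>E S (\<lambda>_. T). (\<Prod>s\<in>S. h s (g s)) * (if g s0 = t0 then 1 else 0))
      = (\<Prod>s\<in>S. \<Sum>t\<in>T. h' s t)"
    using fS fT by (simp add: prod_sum_PiE)
  also have "\<dots> = (\<Sum>t\<in>T. h' s0 t) * (\<Prod>s\<in>S - {s0}. \<Sum>t\<in>T. h' s t)"
    using fS s0 by (simp add: prod.remove)
  also have "(\<Prod>s\<in>S - {s0}. \<Sum>t\<in>T. h' s t) = 1"
    using rows by (intro prod.neutral) (auto simp: h'_def)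
  also have "(\<Sum>t\<in>T. h' s0 t) = h s0 t0"
    using fT t0 by (simp add: h'_def)
  finally show ?thesis by simp
qed

lemma PiE_fiber_restrict:
  assumes w: "w \<in> Pi\<^sub>E {..<N} Q0"
  shows "{u \<in> Pi\<^sub>E {..<N} Q. restrict (\<lambda>k. \<pi> k (u k)) {..<N} = w}
       = Pi\<^sub>E {..<N} (\<lambda>k. {v \<in> Q k. \<pi> k v = w k})"
proof (intro set_eqI iffI)
  fix u assume "u \<in> {u \<in> Pi\<^sub>E {..<N} Q. restrict (\<lambda>k. \<pi> k (u k)) {..<N} = w}"
  then have u: "u \<in> Pi\<^sub>E {..<N} Q" and e: "restrict (\<lambda>k. \<pi> k (u k)) {..<N} = w" by auto
  have "\<pi> k (u k) = w k" if "k < N" for k using fun_cong[OF e, of k] that by simp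
  then show "u \<in> Pi\<^sub>E {..<N} (\<lambda>k. {v \<in> Q k. \<pi> k v = w k})" using u by (auto simp: PiE_iff)
next
  fix u assume u: "u \<in> Pi\<^sub>E {..<N} (\<lambda>k. {v \<in> Q k. \<pi> k v = w k})"
  have "restrict (\<lambda>k. \<pi> k (u k)) {..<N} = w"
  proof
    fix k show "restrict (\<lambda>k. \<pi> k (u k)) {..<N} k = w k"
      using u w by (cases "k < N") (auto simp: PiE_iff extensional_def)
  qed
  then show "u \<in> {u \<in> Pi\<^sub>E {..<N} Q. restrict (\<lambda>k. \<pi> k (u k)) {..<N} = w}"
    using u by (auto simp: PiE_iff)
qed

lemma sum_PiE_prod_fibres:
  fixes N :: nat and Q :: "nat \<Rightarrow> 'q set" and Q0 :: "nat \<Rightarrow> 'r set"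
    and h :: "(nat \<Rightarrow> 'r) \<Rightarrow> nat \<Rightarrow> 'q \<Rightarrow> 'c::comm_semiring_1"
  assumes finQ: "\<forall>k<N. finite (Q k)" and finQ0: "\<forall>k<N. finite (Q0 k)"
    and \<pi>: "\<forall>k<N. \<forall>v\<in>Q k. \<pi> k v \<in> Q0 k"
  shows "(\<Sum>u\<in>Pi\<^sub>E {..<N} Q. \<Prod>k<N. h (restrict (\<lambda>k. \<pi> k (u k)) {..<N}) k (u k))
       = (\<Sum>w\<in>Pi\<^sub>E {..<N} Q0. \<Prod>k<N. \<Sum>v\<in>{v \<in> Q k. \<pi> k v = w k}. h w k v)"
proof -
  define pu where "pu u = restrict (\<lambda>k. \<pi> k (u k)) {..<N}" for u
  have pu: "pu u \<in> Pi\<^sub>E {..<N} Q0" if "u \<in> Pi\<^sub>E {..<N} Q" for u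
    using that \<pi> unfolding pu_def by (auto simp: PiE_iff)
  have "(\<Sum>u\<in>Pi\<^sub>E {..<N} Q. \<Prod>k<N. h (pu u) k (u k))
      = (\<Sum>w\<in>Pi\<^sub>E {..<N} Q0. \<Sum>u\<in>{u \<in> Pi\<^sub>E {..<N} Q. pu u = w}. \<Prod>k<N. h (pu u) k (u k))"
  proof (rule sum.group[symmetric])
    show "finite (Pi\<^sub>E {..<N} Q)" using finQ by (intro finite_PiE) auto
    show "finite (Pi\<^sub>E {..<N} Q0)" using finQ0 by (intro finite_PiE) auto
  qed (use pu in blast)
  also have "\<dots> = (\<Sum>w\<in>Pi\<^sub>E {..<N} Q0. \<Sum>u\<in>Pi\<^sub>E {..<N} (\<lambda>k. {v \<in> Q k. \<pi> k v = w k}). \<Prod>k<N. h w k (u k))"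
  proof (intro sum.cong refl)
    fix w u assume w: "w \<in> Pi\<^sub>E {..<N} Q0"
    show "{u \<in> Pi\<^sub>E {..<N} Q. pu u = w} = Pi\<^sub>E {..<N} (\<lambda>k. {v \<in> Q k. \<pi> k v = w k})"
      unfolding pu_def by (rule PiE_fiber_restrict[OF w])
    assume "u \<in> Pi\<^sub>E {..<N} (\<lambda>k. {v \<in> Q k. \<pi> k v = w k})"
    then have "pu u = w" using PiE_fiber_restrict[OF w, of Q \<pi>] unfolding pu_def by blast
    then show "(\<Prod>k<N. h (pu u) k (u k)) = (\<Prod>k<N. h w k (u k))" by simp
  qed
  also have "\<dots> = (\<Sum>w\<in>Pi\<^sub>E {..<N} Q0. \<Prod>k<N. \<Sum>v\<in>{v \<in> Q k. \<pi> k v = w k}. h w k v)"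
    by (intro sum.cong refl prod_sum_PiE[symmetric]) (use finQ in auto)
  finally show ?thesis unfolding pu_def .
qed

lemma is_correlation_support:
  "is_correlation N A X p \<Longrightarrow> p a x \<noteq> 0 \<Longrightarrow> a \<in> Pi\<^sub>E {..<N} A \<and> x \<in> Pi\<^sub>E {..<N} X"
  unfolding is_correlation_def by meson

lemma is_correlation_row_sum:
  "is_correlation N A X p \<Longrightarrow> a \<in> Pi\<^sub>E {..<N} A \<Longrightarrow> (\<Sum>x\<in>Pi\<^sub>E {..<N} X. p a x) = 1"
  unfolding is_correlation_def by simp

lemma is_correlation_nonneg:
  "is_correlation N A X p \<Longrightarrow> a \<in> Pi\<^sub>E {..<N} A \<Longrightarrow> x \<in> Pi\<^sub>E {..<N} X \<Longrightarrow> 0 \<le> p a x"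
  unfolding is_correlation_def by simp

lemma is_correlationI:
  assumes "\<And>a x. p a x \<noteq> 0 \<Longrightarrow> a \<in> Pi\<^sub>E {..<N} A \<and> x \<in> Pi\<^sub>E {..<N} X"
    and "\<And>a x. a \<in> Pi\<^sub>E {..<N} A \<Longrightarrow> x \<in> Pi\<^sub>E {..<N} X \<Longrightarrow> 0 \<le> p a x"
    and "\<And>a. a \<in> Pi\<^sub>E {..<N} A \<Longrightarrow> (\<Sum>x\<in>Pi\<^sub>E {..<N} X. p a x) = 1"
  shows "is_correlation N A X p"
  unfolding is_correlation_def using assms by (intro conjI allI impI ballI) auto

lemma convex_is_correlation: "convex {p. is_correlation N A X p}"
proof (rule convexI)
  fix p1 p2 and u v :: real
  assume "p1 \<in> {p. is_correlation N A X p}" "p2 \<in> {p. is_correlation N A X p}"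
    and uv: "0 \<le> u" "0 \<le> v" "u + v = 1"
  then have p1: "is_correlation N A X p1" and p2: "is_correlation N A X p2" by simp_all
  show "u *\<^sub>R p1 + v *\<^sub>R p2 \<in> {p. is_correlation N A X p}"
  proof (intro CollectI is_correlationI)
    fix a x assume "(u *\<^sub>R p1 + v *\<^sub>R p2) a x \<noteq> 0"
    then have "p1 a x \<noteq> 0 \<or> p2 a x \<noteq> 0" by (auto simp: plus_fun_def scaleR_fun_def)
    then show "a \<in> Pi\<^sub>E {..<N} A \<and> x \<in> Pi\<^sub>E {..<N} X"
      using is_correlation_support[OF p1, of a x] is_correlation_support[OF p2, of a x] by blast
  next
    fix a x assume "a \<in> Pi\<^sub>E {..<N} A" "x \<in> Pi\<^sub>E {..<N} X"
    then show "0 \<le> (u *\<^sub>R p1 + v *\<^sub>R p2) a x"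
      using is_correlation_nonneg[OF p1] is_correlation_nonneg[OF p2] uv
      by (simp add: plus_fun_def scaleR_fun_def)
  next
    fix a assume "a \<in> Pi\<^sub>E {..<N} A"
    then show "(\<Sum>x\<in>Pi\<^sub>E {..<N} X. (u *\<^sub>R p1 + v *\<^sub>R p2) a x) = 1"
      using is_correlation_row_sum[OF p1] is_correlation_row_sum[OF p2] uv
      by (simp add: plus_fun_def scaleR_fun_def sum.distrib sum_distrib_left[symmetric])
  qed
qed

lemma Nats_valued_correlation_deterministic:
  assumes corr: "is_correlation N A X p" and nat: "\<forall>a x. p a x \<in> \<nat>"
    and finX: "finite (Pi\<^sub>E {..<N} X)"
  shows "deterministic_correlation N A X p"
proof -
  have "\<exists>x. x \<in> Pi\<^sub>E {..<N} X \<and> (\<forall>y\<in>Pi\<^sub>E {..<N} X. p a y = (if y = x then 1 else 0))"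
    if a: "a \<in> Pi\<^sub>E {..<N} A" for a
  proof -
    have "\<forall>y\<in>Pi\<^sub>E {..<N} X. p a y \<in> \<nat>" using nat by blast
    then obtain x where "x \<in> Pi\<^sub>E {..<N} X" "\<forall>y\<in>Pi\<^sub>E {..<N} X. p a y = (if y = x then 1 else 0)"
      by (rule sum_Nats_eq_one_obtains_indicator[OF finX _ is_correlation_row_sum[OF corr a]])
    then show ?thesis by blast
  qed
  then have "\<forall>a\<in>Pi\<^sub>E {..<N} A. \<exists>x. x \<in> Pi\<^sub>E {..<N} X \<and> (\<forall>y\<in>Pi\<^sub>E {..<N} X. p a y = (if y = x then 1 else 0))"
    by blast
  from bchoice[OF this] obtain f where f: "\<forall>a\<in>Pi\<^sub>E {..<N} A. f a \<in> Pi\<^sub>E {..<N} X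
      \<and> (\<forall>y\<in>Pi\<^sub>E {..<N} X. p a y = (if y = f a then 1 else 0))"
    by blast
  have f_Pi: "f \<in> Pi\<^sub>E {..<N} A \<rightarrow> Pi\<^sub>E {..<N} X"
    by (rule Pi_I) (use f in blast)
  have "p a x = (if a \<in> Pi\<^sub>E {..<N} A \<and> x = f a then 1 else 0)" for a x
  proof (cases "a \<in> Pi\<^sub>E {..<N} A \<and> x \<in> Pi\<^sub>E {..<N} X")
    case False
    then have "p a x = 0" using is_correlation_support[OF corr] by blast
    moreover have "\<not> (a \<in> Pi\<^sub>E {..<N} A \<and> x = f a)" using False f by auto
    ultimately show ?thesis by simp
  qed (use f in auto)
  then have "p = (\<lambda>a x. if a \<in> Pi\<^sub>E {..<N} A \<and> x = f a then 1 else 0)"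
    by (intro ext)
  then show ?thesis
    unfolding deterministic_correlation_def by (intro exI[of _ f] conjI f_Pi)
qed

lemma finite_deterministic_correlations:
  fixes A :: "nat \<Rightarrow> 'a set" and X :: "nat \<Rightarrow> 'x set"
  assumes fin: "\<forall>k<N. finite (A k) \<and> finite (X k)"
  shows "finite {p. deterministic_correlation N A X p}"
proof -
  define F where "F f = (\<lambda>a x. if a \<in> Pi\<^sub>E {..<N} A \<and> x = f a then 1 else (0::real))"
    for f :: "(nat \<Rightarrow> 'a) \<Rightarrow> (nat \<Rightarrow> 'x)"
  have "{p. deterministic_correlation N A X p} \<subseteq> F ` Pi\<^sub>E (Pi\<^sub>E {..<N} A) (\<lambda>_. Pi\<^sub>E {..<N} X)"
  proof
    fix p assume "p \<in> {p. deterministic_correlation N A X p}"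
    then obtain f where f: "f \<in> Pi\<^sub>E {..<N} A \<rightarrow> Pi\<^sub>E {..<N} X" and p: "p = F f"
      unfolding deterministic_correlation_def F_def by blast
    have "p = F (restrict f (Pi\<^sub>E {..<N} A))" unfolding p F_def by (intro ext) simp
    moreover have "restrict f (Pi\<^sub>E {..<N} A) \<in> Pi\<^sub>E (Pi\<^sub>E {..<N} A) (\<lambda>_. Pi\<^sub>E {..<N} X)"
      using f by simp
    ultimately show "p \<in> F ` Pi\<^sub>E (Pi\<^sub>E {..<N} A) (\<lambda>_. Pi\<^sub>E {..<N} X)" by blast
  qed
  moreover have "finite (Pi\<^sub>E (Pi\<^sub>E {..<N} A) (\<lambda>_. Pi\<^sub>E {..<N} X))"
    using fin by (intro finite_PiE) auto
  ultimately show ?thesis by (meson finite_imageI finite_subset)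
qed

lemma local_intervention_nonneg:
  "local_intervention A I X Q L \<Longrightarrow> a \<in> A \<Longrightarrow> i \<in> I \<Longrightarrow> x \<in> X \<Longrightarrow> v \<in> Q \<Longrightarrow> 0 \<le> L a i x v"
  unfolding local_intervention_def by blast

lemma compose_outside [simp]:
  assumes "\<not> (a \<in> Pi\<^sub>E {..<N} A \<and> x \<in> Pi\<^sub>E {..<N} X)"
  shows "compose N A X I Q L P a x = 0"
  unfolding compose_def by (simp only: if_not_P[OF assms])

lemma linear_compose: "linear (compose N A X I Q L)"
proof (rule linearI)
  fix P1 P2 :: "(nat \<Rightarrow> nat) \<Rightarrow> (nat \<Rightarrow> nat) \<Rightarrow> real" and r :: real
  show "compose N A X I Q L (P1 + P2) = compose N A X I Q L P1 + compose N A X I Q L P2"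
    by (auto simp: fun_eq_iff compose_def plus_fun_def sum.distrib distrib_left)
  show "compose N A X I Q L (r *\<^sub>R P1) = r *\<^sub>R compose N A X I Q L P1"
    by (auto simp: fun_eq_iff compose_def scaleR_fun_def sum_distrib_left mult_ac)
qed

lemma compose_in_Nats:
  assumes "\<And>k a i x v. L k a i x v \<in> \<nat>" and "\<And>i u. P i u \<in> \<nat>"
  shows "compose N A X I Q L P a x \<in> \<nat>"
  unfolding compose_def using assms by (simp add: sum_in_Nats prod_in_Nats)

lemma compose_row_sum:
  assumes a: "a \<in> Pi\<^sub>E {..<N} A" and finX: "\<forall>k<N. finite (X k)"
  shows "(\<Sum>x\<in>Pi\<^sub>E {..<N} X. compose N A X I Q L P a x)
       = (\<Sum>i\<in>Pi\<^sub>E {..<N} I. \<Sum>u\<in>Pi\<^sub>E {..<N} Q.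
            (\<Prod>k<N. \<Sum>y\<in>X k. L k (a k) (i k) y (u k)) * P i u)"
proof -
  have row: "(\<Sum>x\<in>Pi\<^sub>E {..<N} X. \<Prod>k<N. L k (a k) (i k) (x k) (u k))
      = (\<Prod>k<N. \<Sum>y\<in>X k. L k (a k) (i k) y (u k))" for i u
    using finX by (subst prod_sum_PiE) auto
  have "(\<Sum>x\<in>Pi\<^sub>E {..<N} X. compose N A X I Q L P a x)
      = (\<Sum>x\<in>Pi\<^sub>E {..<N} X. \<Sum>i\<in>Pi\<^sub>E {..<N} I. \<Sum>u\<in>Pi\<^sub>E {..<N} Q.
            (\<Prod>k<N. L k (a k) (i k) (x k) (u k)) * P i u)"
    using a by (intro sum.cong) (auto simp: compose_def)
  also have "\<dots> = (\<Sum>i\<in>Pi\<^sub>E {..<N} I. \<Sum>u\<in>Pi\<^sub>E {..<N} Q. \<Sum>x\<in>Pi\<^sub>E {..<N} X.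
            (\<Prod>k<N. L k (a k) (i k) (x k) (u k)) * P i u)"
    by (subst sum.swap) (rule sum.cong[OF refl sum.swap])
  also have "\<dots> = (\<Sum>i\<in>Pi\<^sub>E {..<N} I. \<Sum>u\<in>Pi\<^sub>E {..<N} Q.
            (\<Prod>k<N. \<Sum>y\<in>X k. L k (a k) (i k) y (u k)) * P i u)"
    by (simp only: sum_distrib_right[symmetric] row)
  finally show ?thesis .
qed

lemma compose_delta_process:
  assumes om: "\<omega> \<in> Pi\<^sub>E {..<N} Q \<rightarrow> Pi\<^sub>E {..<N} I" and fin: "\<forall>k<N. finite (I k)"
  shows "compose N A X I Q L (delta_process N Q \<omega>) a x =
    (if a \<in> Pi\<^sub>E {..<N} A \<and> x \<in> Pi\<^sub>E {..<N} X then
      (\<Sum>u\<in>Pi\<^sub>E {..<N} Q. \<Prod>k<N. L k (a k) (\<omega> u k) (x k) (u k)) else 0)"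
proof -
  have finI: "finite (Pi\<^sub>E {..<N} I)" using fin by (intro finite_PiE) auto
  have row: "(\<Sum>i \<in> Pi\<^sub>E {..<N} I. (\<Prod>k<N. L k (a k) (i k) (x k) (u k)) * delta_process N Q \<omega> i u)
      = (\<Prod>k<N. L k (a k) (\<omega> u k) (x k) (u k))" if u: "u \<in> Pi\<^sub>E {..<N} Q" for u
  proof -
    have "(\<Sum>i \<in> Pi\<^sub>E {..<N} I. (\<Prod>k<N. L k (a k) (i k) (x k) (u k)) * delta_process N Q \<omega> i u)
       = (\<Sum>i \<in> Pi\<^sub>E {..<N} I. if \<omega> u = i then (\<Prod>k<N. L k (a k) (i k) (x k) (u k)) else 0)"
      using u by (intro sum.cong) (auto simp: delta_process_def)
    also have "\<dots> = (\<Prod>k<N. L k (a k) (\<omega> u k) (x k) (u k))"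
      using finI om u by (subst sum.delta') auto
    finally show ?thesis .
  qed
  have "(\<Sum>i \<in> Pi\<^sub>E {..<N} I. \<Sum>u \<in> Pi\<^sub>E {..<N} Q.
          (\<Prod>k<N. L k (a k) (i k) (x k) (u k)) * delta_process N Q \<omega> i u)
      = (\<Sum>u\<in>Pi\<^sub>E {..<N} Q. \<Prod>k<N. L k (a k) (\<omega> u k) (x k) (u k))"
    by (subst sum.swap) (rule sum.cong[OF refl row])
  then show ?thesis
    unfolding compose_def by simp
qed

lemma cond_dist_process_delta:
  assumes om: "\<omega> \<in> Pi\<^sub>E {..<N} Q \<rightarrow> Pi\<^sub>E {..<N} I" and fin: "\<forall>k<N. finite (I k)"
  shows "cond_dist_process N I Q (delta_process N Q \<omega>)"
proof -
  have finI: "finite (Pi\<^sub>E {..<N} I)" using fin by (intro finite_PiE) auto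
  have "(\<Sum>i\<in>Pi\<^sub>E {..<N} I. delta_process N Q \<omega> i u) = 1" if u: "u \<in> Pi\<^sub>E {..<N} Q" for u
  proof -
    have "(\<Sum>i\<in>Pi\<^sub>E {..<N} I. delta_process N Q \<omega> i u) = (\<Sum>i\<in>Pi\<^sub>E {..<N} I. if \<omega> u = i then 1 else 0)"
      using u by (intro sum.cong) (auto simp: delta_process_def)
    also have "\<dots> = 1" using finI om u by (subst sum.delta') auto
    finally show ?thesis .
  qed
  then show ?thesis
    unfolding cond_dist_process_def by (simp add: delta_process_def)
qed

lemma compose_in_DC:
  assumes "is_correlation N A X (compose N A X I Q L P)" and "\<forall>k<N. finite (I k) \<and> finite (Q k)"
    and "\<forall>k<N. local_intervention (A k) (I k) (X k) (Q k) (L k)"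
    and "P \<in> det_extrema_polytope N I Q"
  shows "compose N A X I Q L P \<in> DC N A X"
  unfolding DC_def using assms by blast

lemma is_correlation_compose_outputs_nonempty:
  assumes corr: "is_correlation N A X (compose N A X I Q L P)" and a: "a \<in> Pi\<^sub>E {..<N} A"
  shows "\<forall>k<N. Q k \<noteq> {}"
proof (rule ccontr)
  assume "\<not> ?thesis"
  then have "Pi\<^sub>E {..<N} Q = {}" by (auto simp: PiE_eq_empty_iff)
  then have "compose N A X I Q L P a x = 0" for x by (simp add: compose_def)
  with is_correlation_row_sum[OF corr a] show False by simp
qed

section \<open>Classical processes and relabelling\<close>

lemma classical_process_cond_dist: "classical_process N I Q P \<Longrightarrow> cond_dist_process N I Q P"
  by (simp add: classical_process_def)

lemma local_intervention_trivialise: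
  assumes li: "local_intervention A I X Q L" and a: "a \<in> A"
  shows "local_intervention {0::nat} I {0::nat} Q (\<lambda>_ i _ v. \<Sum>y\<in>X. L a i y v)"
proof -
  have "(\<Sum>v\<in>Q. \<Sum>y\<in>X. L a i y v) = 1" "\<forall>v\<in>Q. 0 \<le> (\<Sum>y\<in>X. L a i y v)" if i: "i \<in> I" for i
  proof -
    have "(\<Sum>v\<in>Q. \<Sum>y\<in>X. L a i y v) = (\<Sum>(y, v)\<in>X \<times> Q. L a i y v)"
      by (subst sum.swap) (simp add: sum.cartesian_product)
    also have "\<dots> = 1"
      using li a i unfolding local_intervention_def by blast
    finally show "(\<Sum>v\<in>Q. \<Sum>y\<in>X. L a i y v) = 1" .
    show "\<forall>v\<in>Q. 0 \<le> (\<Sum>y\<in>X. L a i y v)"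
      using li a i unfolding local_intervention_def by (auto intro!: sum_nonneg)
  qed
  then show ?thesis
    unfolding local_intervention_def by (simp add: sum.cartesian_product[symmetric])
qed

text \<open>The defining property of a classical process only tests interventions with settings
  and outcomes in \<open>nat\<close>. Normalisation for arbitrary types follows by testing the process
  on a single setting and outcome, with the outcome \<open>x\<^sub>k\<close> summed out of each intervention.\<close>

lemma classical_process_row_sum:
  assumes cp: "classical_process N I Q P" and finX: "\<forall>k<N. finite (X k)"
    and li: "\<forall>k<N. local_intervention (A k) (I k) (X k) (Q k) (L k)" and a: "a \<in> Pi\<^sub>E {..<N} A"
  shows "(\<Sum>x\<in>Pi\<^sub>E {..<N} X. compose N A X I Q L P a x) = 1"
proof -
  define L' where "L' = (\<lambda>k (_::nat) i (_::nat) v. \<Sum>y\<in>X k. L k (a k) i y v)"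
  define a0 where "a0 = (\<lambda>k\<in>{..<N}. (0::nat))"
  have single: "Pi\<^sub>E {..<N} (\<lambda>_. {0::nat}) = {a0}"
    unfolding a0_def by (subst PiE_eq_singleton) auto
  have "\<forall>k<N. local_intervention {0} (I k) {0} (Q k) (L' k)"
    unfolding L'_def using li a by (auto intro: local_intervention_trivialise simp: PiE_iff)
  then have "is_correlation N (\<lambda>_. {0}) (\<lambda>_. {0}) (compose N (\<lambda>_. {0::nat}) (\<lambda>_. {0::nat}) I Q L' P)"
    using cp unfolding classical_process_def by simp
  from is_correlation_row_sum[OF this, of a0]
  have "1 = compose N (\<lambda>_. {0::nat}) (\<lambda>_. {0::nat}) I Q L' P a0 a0"
    unfolding single by simp
  also have "\<dots> = (\<Sum>i\<in>Pi\<^sub>E {..<N} I. \<Sum>u\<in>Pi\<^sub>E {..<N} Q.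
          (\<Prod>k<N. \<Sum>y\<in>X k. L k (a k) (i k) y (u k)) * P i u)"
    using single unfolding compose_def L'_def by simp
  also have "\<dots> = (\<Sum>x\<in>Pi\<^sub>E {..<N} X. compose N A X I Q L P a x)"
    by (rule compose_row_sum[OF a finX, symmetric])
  finally show ?thesis by simp
qed

lemma classical_process_compose_is_correlation:
  fixes A :: "nat \<Rightarrow> 'a set" and X :: "nat \<Rightarrow> 'x set"
  assumes cp: "classical_process N I Q P" and fin: "\<forall>k<N. finite (A k) \<and> finite (X k)"
    and li: "\<forall>k<N. local_intervention (A k) (I k) (X k) (Q k) (L k)"
  shows "is_correlation N A X (compose N A X I Q L P)"
proof (rule is_correlationI)
  fix a x
  show "a \<in> Pi\<^sub>E {..<N} A \<and> x \<in> Pi\<^sub>E {..<N} X" if "compose N A X I Q L P a x \<noteq> 0"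
    using that by (metis compose_outside)
  assume a: "a \<in> Pi\<^sub>E {..<N} A" and x: "x \<in> Pi\<^sub>E {..<N} X"
  have "0 \<le> L k (a k) (i k) (x k) (u k)"
    if k: "k < N" and "i \<in> Pi\<^sub>E {..<N} I" "u \<in> Pi\<^sub>E {..<N} Q" for k i u
  proof (rule local_intervention_nonneg[of "A k" "I k" "X k" "Q k" "L k"])
    show "local_intervention (A k) (I k) (X k) (Q k) (L k)" using li k by blast
  qed (use that a x in auto)
  moreover have "0 \<le> P i u" if "i \<in> Pi\<^sub>E {..<N} I" "u \<in> Pi\<^sub>E {..<N} Q" for i u
    using that classical_process_cond_dist[OF cp] unfolding cond_dist_process_def by blast
  ultimately show "0 \<le> compose N A X I Q L P a x"
    using a x unfolding compose_def by (auto intro!: sum_nonneg mult_nonneg_nonneg prod_nonneg)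
next
  fix a assume a: "a \<in> Pi\<^sub>E {..<N} A"
  have "\<forall>k<N. finite (X k)" using fin by blast
  from classical_process_row_sum[OF cp this li a]
  show "(\<Sum>x\<in>Pi\<^sub>E {..<N} X. compose N A X I Q L P a x) = 1" .
qed

lemma local_intervention_coarse_grain:
  assumes li: "local_intervention A I X Q L" and fin: "finite Q" "finite Q0"
    and \<pi>: "\<forall>v\<in>Q. \<pi> v \<in> Q0" and \<tau>: "\<forall>n\<in>I0. \<tau> n \<in> I"
  shows "local_intervention A I0 X Q0 (\<lambda>a n x w. \<Sum>v\<in>{v \<in> Q. \<pi> v = w}. L a (\<tau> n) x v)"
  unfolding local_intervention_def
proof (intro ballI conjI)
  fix a n x w assume "a \<in> A" "n \<in> I0" "x \<in> X"
  then show "0 \<le> (\<Sum>v\<in>{v \<in> Q. \<pi> v = w}. L a (\<tau> n) x v)"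
    using li \<tau> unfolding local_intervention_def by (auto intro!: sum_nonneg)
next
  fix a n assume "a \<in> A" "n \<in> I0"
  then have L: "(\<Sum>(x, v)\<in>X \<times> Q. L a (\<tau> n) x v) = 1"
    using li \<tau> unfolding local_intervention_def by blast
  have "(\<Sum>w\<in>Q0. \<Sum>v\<in>{v \<in> Q. \<pi> v = w}. L a (\<tau> n) x v) = (\<Sum>v\<in>Q. L a (\<tau> n) x v)" for x
    using fin \<pi> by (intro sum.group) auto
  then show "(\<Sum>(x, w)\<in>X \<times> Q0. \<Sum>v\<in>{v \<in> Q. \<pi> v = w}. L a (\<tau> n) x v) = 1"
    using L by (simp add: sum.cartesian_product[symmetric])
qed

lemma compose_delta_coarse_grain:
  assumes om0: "\<omega>0 \<in> Pi\<^sub>E {..<N} Q0 \<rightarrow> Pi\<^sub>E {..<N} I0"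
    and finIQ: "\<forall>k<N. finite (I k) \<and> finite (Q k)" and finIQ0: "\<forall>k<N. finite (I0 k) \<and> finite (Q0 k)"
    and \<pi>: "\<forall>k<N. \<forall>v\<in>Q k. \<pi> k v \<in> Q0 k" and \<tau>: "\<forall>k<N. \<forall>n\<in>I0 k. \<tau> k n \<in> I k"
    and \<omega>: "\<omega> = (\<lambda>u. restrict (\<lambda>k. \<tau> k (\<omega>0 (restrict (\<lambda>k. \<pi> k (u k)) {..<N}) k)) {..<N})"
  shows "\<omega> \<in> Pi\<^sub>E {..<N} Q \<rightarrow> Pi\<^sub>E {..<N} I"
    and "compose N A X I Q L (delta_process N Q \<omega>)
       = compose N A X I0 Q0 (\<lambda>k a n x w. \<Sum>v\<in>{v \<in> Q k. \<pi> k v = w}. L k a (\<tau> k n) x v)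
           (delta_process N Q0 \<omega>0)"
proof -
  show om: "\<omega> \<in> Pi\<^sub>E {..<N} Q \<rightarrow> Pi\<^sub>E {..<N} I"
  proof
    fix u assume "u \<in> Pi\<^sub>E {..<N} Q"
    then have "restrict (\<lambda>k. \<pi> k (u k)) {..<N} \<in> Pi\<^sub>E {..<N} Q0"
      using \<pi> by (auto simp: PiE_iff)
    then have "\<omega>0 (restrict (\<lambda>k. \<pi> k (u k)) {..<N}) \<in> Pi\<^sub>E {..<N} I0" by (rule funcset_mem[OF om0])
    then show "\<omega> u \<in> Pi\<^sub>E {..<N} I" using \<tau> unfolding \<omega> by (auto simp: PiE_iff)
  qed
  have "(\<Sum>u\<in>Pi\<^sub>E {..<N} Q. \<Prod>k<N. L k (a k) (\<omega> u k) (x k) (u k))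
      = (\<Sum>w\<in>Pi\<^sub>E {..<N} Q0. \<Prod>k<N. \<Sum>v\<in>{v \<in> Q k. \<pi> k v = w k}. L k (a k) (\<tau> k (\<omega>0 w k)) (x k) v)"
    for a x
  proof -
    define h where "h w k v = L k (a k) (\<tau> k (\<omega>0 w k)) (x k) v" for w k v
    have "(\<Sum>u\<in>Pi\<^sub>E {..<N} Q. \<Prod>k<N. L k (a k) (\<omega> u k) (x k) (u k))
        = (\<Sum>u\<in>Pi\<^sub>E {..<N} Q. \<Prod>k<N. h (restrict (\<lambda>k. \<pi> k (u k)) {..<N}) k (u k))"
      unfolding \<omega> h_def by (intro sum.cong refl prod.cong) auto
    also have "\<dots> = (\<Sum>w\<in>Pi\<^sub>E {..<N} Q0. \<Prod>k<N. \<Sum>v\<in>{v \<in> Q k. \<pi> k v = w k}. h w k v)"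
      by (rule sum_PiE_prod_fibres) (use finIQ finIQ0 \<pi> in auto)
    finally show ?thesis unfolding h_def .
  qed
  then show "compose N A X I Q L (delta_process N Q \<omega>)
       = compose N A X I0 Q0 (\<lambda>k a n x w. \<Sum>v\<in>{v \<in> Q k. \<pi> k v = w}. L k a (\<tau> k n) x v)
           (delta_process N Q0 \<omega>0)"
    using finIQ finIQ0 by (simp add: fun_eq_iff compose_delta_process[OF om] compose_delta_process[OF om0])
qed

text \<open>The coarse-graining of outputs is absorbed into the interventions of a test, so the
  relabelled function passes every test that \<open>\<omega>0\<close> passes.\<close>

lemma process_function_relabel:
  assumes pf0: "process_function N I0 Q0 \<omega>0"
    and finIQ: "\<forall>k<N. finite (I k) \<and> finite (Q k)"
    and \<pi>: "\<forall>k<N. \<forall>v\<in>Q k. \<pi> k v \<in> Q0 k" and \<tau>: "\<forall>k<N. \<forall>n\<in>I0 k. \<tau> k n \<in> I k"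
  shows "process_function N I Q
           (\<lambda>u. restrict (\<lambda>k. \<tau> k (\<omega>0 (restrict (\<lambda>k. \<pi> k (u k)) {..<N}) k)) {..<N})"
    (is "process_function N I Q ?\<omega>")
proof -
  have om0: "\<omega>0 \<in> Pi\<^sub>E {..<N} Q0 \<rightarrow> Pi\<^sub>E {..<N} I0"
    and finIQ0: "\<forall>k<N. finite (I0 k) \<and> finite (Q0 k)"
    and cl0: "\<And>(A' :: nat \<Rightarrow> nat set) (X' :: nat \<Rightarrow> nat set) L.
        (\<forall>k<N. finite (A' k) \<and> finite (X' k)) \<Longrightarrow>
        (\<forall>k<N. local_intervention (A' k) (I0 k) (X' k) (Q0 k) (L k)) \<Longrightarrow>
        is_correlation N A' X' (compose N A' X' I0 Q0 L (delta_process N Q0 \<omega>0))"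
    using pf0 unfolding process_function_def classical_process_def by blast+
  note cg = compose_delta_coarse_grain[OF om0 finIQ finIQ0 \<pi> \<tau> refl]
  have "is_correlation N A' X' (compose N A' X' I Q L (delta_process N Q ?\<omega>))"
    if "\<forall>k<N. finite (A' k) \<and> finite (X' k)"
      and "\<forall>k<N. local_intervention (A' k) (I k) (X' k) (Q k) (L k)"
    for A' X' :: "nat \<Rightarrow> nat set" and L
    unfolding cg(2) using that finIQ finIQ0 \<pi> \<tau>
    by (intro cl0 allI impI local_intervention_coarse_grain) auto
  then show ?thesis
    using cg(1) finIQ cond_dist_process_delta[OF cg(1)]
    unfolding process_function_def classical_process_def by auto
qed

section \<open>Decomposition into deterministic correlations\<close>

text \<open>Every local intervention is a convex mixture of deterministic ones; the weight of a
  deterministic response function \<open>g\<close> is the product of the probabilities of its values.\<close>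

definition det_intervention :: "('a \<times> 'i \<Rightarrow> 'x \<times> 'o) \<Rightarrow> 'a \<Rightarrow> 'i \<Rightarrow> 'x \<Rightarrow> 'o \<Rightarrow> real" where
  "det_intervention g a i x v = (if g (a, i) = (x, v) then 1 else 0)"

definition intervention_weight ::
  "'a set \<Rightarrow> 'i set \<Rightarrow> ('a \<Rightarrow> 'i \<Rightarrow> 'x \<Rightarrow> 'o \<Rightarrow> real) \<Rightarrow> ('a \<times> 'i \<Rightarrow> 'x \<times> 'o) \<Rightarrow> real" where
  "intervention_weight A I L g = (\<Prod>s\<in>A \<times> I. L (fst s) (snd s) (fst (g s)) (snd (g s)))"

lemma local_intervention_det_intervention:
  assumes "finite X" "finite Q" "\<forall>s\<in>A \<times> I. g s \<in> X \<times> Q"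
  shows "local_intervention A I X Q (det_intervention g)"
proof -
  have "(\<Sum>(x, v)\<in>X \<times> Q. det_intervention g a i x v) = 1" if "a \<in> A" "i \<in> I" for a i
    using assms that by (simp add: det_intervention_def split_def sum.delta')
  then show ?thesis
    unfolding local_intervention_def by (simp add: det_intervention_def split_def)
qed

lemma intervention_weight_nonneg:
  assumes "local_intervention A I X Q L" "g \<in> Pi\<^sub>E (A \<times> I) (\<lambda>_. X \<times> Q)"
  shows "0 \<le> intervention_weight A I L g"
  using assms unfolding intervention_weight_def local_intervention_def
  by (fastforce intro!: prod_nonneg simp: PiE_iff)

lemma intervention_rows:
  assumes "local_intervention A I X Q L"
  shows "\<forall>s\<in>A \<times> I. (\<Sum>t\<in>X \<times> Q. L (fst s) (snd s) (fst t) (snd t)) = 1"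
  using assms unfolding local_intervention_def by (auto simp: split_def)

lemma sum_intervention_weight:
  assumes li: "local_intervention A I X Q L" and fin: "finite A" "finite I" "finite X" "finite Q"
  shows "(\<Sum>g\<in>Pi\<^sub>E (A \<times> I) (\<lambda>_. X \<times> Q). intervention_weight A I L g) = 1"
proof -
  have "(\<Sum>g\<in>Pi\<^sub>E (A \<times> I) (\<lambda>_. X \<times> Q). intervention_weight A I L g)
      = (\<Prod>s\<in>A \<times> I. \<Sum>t\<in>X \<times> Q. L (fst s) (snd s) (fst t) (snd t))"
    unfolding intervention_weight_def using fin by (simp add: prod_sum_PiE)
  also have "\<dots> = 1"
    using intervention_rows[OF li] by (rule prod.neutral)
  finally show ?thesis .
qed

lemma sum_intervention_weight_det_intervention:
  assumes li: "local_intervention A I X Q L" and fin: "finite A" "finite I" "finite X" "finite Q"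
    and mem: "a \<in> A" "i \<in> I" "x \<in> X" "v \<in> Q"
  shows "(\<Sum>g\<in>Pi\<^sub>E (A \<times> I) (\<lambda>_. X \<times> Q). intervention_weight A I L g * det_intervention g a i x v)
       = L a i x v"
proof -
  define h where "h s t = L (fst s) (snd s) (fst t) (snd t)" for s t
  have "(\<Sum>g\<in>Pi\<^sub>E (A \<times> I) (\<lambda>_. X \<times> Q). (\<Prod>s\<in>A \<times> I. h s (g s)) * (if g (a, i) = (x, v) then 1 else 0))
      = h (a, i) (x, v)"
    using fin mem intervention_rows[OF li] unfolding h_def by (intro sum_PiE_prod_indicator) auto
  then show ?thesis
    unfolding intervention_weight_def det_intervention_def h_def by simp
qed

lemma compose_det_intervention_deterministic:
  fixes A :: "nat \<Rightarrow> 'a set" and X :: "nat \<Rightarrow> 'x set"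
  assumes fin: "\<forall>k<N. finite (A k) \<and> finite (X k)" and finIQ: "\<forall>k<N. finite (I k) \<and> finite (Q k)"
    and pf: "process_function N I Q \<omega>"
    and g: "\<forall>k<N. \<forall>s\<in>A k \<times> I k. g k s \<in> X k \<times> Q k"
  shows "compose N A X I Q (\<lambda>k. det_intervention (g k)) (delta_process N Q \<omega>)
           \<in> DC N A X \<inter> {p. deterministic_correlation N A X p}"
proof -
  let ?p = "compose N A X I Q (\<lambda>k. det_intervention (g k)) (delta_process N Q \<omega>)"
  have li: "\<forall>k<N. local_intervention (A k) (I k) (X k) (Q k) (det_intervention (g k))"
  proof (intro allI impI)
    fix k assume "k < N"
    then show "local_intervention (A k) (I k) (X k) (Q k) (det_intervention (g k))"
      using fin finIQ g by (intro local_intervention_det_intervention) auto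
  qed
  have "classical_process N I Q (delta_process N Q \<omega>)"
    using pf unfolding process_function_def by blast
  then have corr: "is_correlation N A X ?p"
    by (rule classical_process_compose_is_correlation[OF _ fin li])
  have "delta_process N Q \<omega> \<in> det_extrema_polytope N I Q"
    unfolding det_extrema_polytope_def by (rule hull_inc) (use pf in blast)
  then have "?p \<in> DC N A X"
    by (rule compose_in_DC[OF corr finIQ li])
  moreover have "\<forall>a x. ?p a x \<in> \<nat>"
    by (intro allI compose_in_Nats) (simp_all add: det_intervention_def delta_process_def)
  with corr fin have "deterministic_correlation N A X ?p"
    by (intro Nats_valued_correlation_deterministic finite_PiE) auto
  ultimately show ?thesis by blast
qed

lemma compose_delta_det_mixture:
  fixes A :: "nat \<Rightarrow> 'a set" and X :: "nat \<Rightarrow> 'x set"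
  assumes fin: "\<forall>k<N. finite (A k) \<and> finite (X k)" and finIQ: "\<forall>k<N. finite (I k) \<and> finite (Q k)"
    and om: "\<omega> \<in> Pi\<^sub>E {..<N} Q \<rightarrow> Pi\<^sub>E {..<N} I"
    and li: "\<forall>k<N. local_intervention (A k) (I k) (X k) (Q k) (L k)"
    and G: "G = (\<lambda>k. Pi\<^sub>E (A k \<times> I k) (\<lambda>_. X k \<times> Q k))"
  shows "compose N A X I Q L (delta_process N Q \<omega>)
       = (\<Sum>\<gamma>\<in>Pi\<^sub>E {..<N} G. (\<Prod>k<N. intervention_weight (A k) (I k) (L k) (\<gamma> k))
            *\<^sub>R compose N A X I Q (\<lambda>k. det_intervention (\<gamma> k)) (delta_process N Q \<omega>))"
    (is "_ = ?mix")
proof (intro ext)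
  fix a x
  let ?w = "\<lambda>k. intervention_weight (A k) (I k) (L k)"
  have finI: "\<forall>k<N. finite (I k)" using finIQ by simp
  have finG: "finite (Pi\<^sub>E {..<N} G)"
    unfolding G using fin finIQ by (auto intro!: finite_PiE)
  show "compose N A X I Q L (delta_process N Q \<omega>) a x = ?mix a x"
  proof (cases "a \<in> Pi\<^sub>E {..<N} A \<and> x \<in> Pi\<^sub>E {..<N} X")
    case True
    have "?mix a x = (\<Sum>\<gamma>\<in>Pi\<^sub>E {..<N} G. (\<Prod>k<N. ?w k (\<gamma> k))
          * (\<Sum>u\<in>Pi\<^sub>E {..<N} Q. \<Prod>k<N. det_intervention (\<gamma> k) (a k) (\<omega> u k) (x k) (u k)))"
      using True by (simp add: sum_fun_apply[OF finG] scaleR_fun_def compose_delta_process[OF om finI])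
    also have "\<dots> = (\<Sum>u\<in>Pi\<^sub>E {..<N} Q. \<Sum>\<gamma>\<in>Pi\<^sub>E {..<N} G.
          \<Prod>k<N. ?w k (\<gamma> k) * det_intervention (\<gamma> k) (a k) (\<omega> u k) (x k) (u k))"
      by (simp add: sum_distrib_left prod.distrib sum.swap[of _ "Pi\<^sub>E {..<N} G"])
    also have "\<dots> = (\<Sum>u\<in>Pi\<^sub>E {..<N} Q. \<Prod>k<N. \<Sum>g\<in>G k. ?w k g * det_intervention g (a k) (\<omega> u k) (x k) (u k))"
      using fin finIQ unfolding G by (intro sum.cong refl, subst prod_sum_PiE) (auto intro!: finite_PiE)
    also have "\<dots> = (\<Sum>u\<in>Pi\<^sub>E {..<N} Q. \<Prod>k<N. L k (a k) (\<omega> u k) (x k) (u k))"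
    proof (intro sum.cong refl prod.cong)
      fix u k assume u: "u \<in> Pi\<^sub>E {..<N} Q" and k: "k \<in> {..<N}"
      then have "\<omega> u k \<in> I k" using funcset_mem[OF om u] by auto
      then show "(\<Sum>g\<in>G k. ?w k g * det_intervention g (a k) (\<omega> u k) (x k) (u k)) = L k (a k) (\<omega> u k) (x k) (u k)"
        unfolding G using li fin finIQ k True u
        by (intro sum_intervention_weight_det_intervention) auto
    qed
    finally show ?thesis
      using True by (simp add: compose_delta_process[OF om finI])
  qed (simp add: sum_fun_apply[OF finG] scaleR_fun_def)
qed

lemma compose_delta_in_hull_deterministic:
  fixes A :: "nat \<Rightarrow> 'a set" and X :: "nat \<Rightarrow> 'x set"
  assumes fin: "\<forall>k<N. finite (A k) \<and> finite (X k)" and finIQ: "\<forall>k<N. finite (I k) \<and> finite (Q k)"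
    and pf: "process_function N I Q \<omega>"
    and li: "\<forall>k<N. local_intervention (A k) (I k) (X k) (Q k) (L k)"
  shows "compose N A X I Q L (delta_process N Q \<omega>)
           \<in> convex hull (DC N A X \<inter> {p. deterministic_correlation N A X p})"
proof -
  define G where "G = (\<lambda>k. Pi\<^sub>E (A k \<times> I k) (\<lambda>_. X k \<times> Q k))"
  let ?w = "\<lambda>\<gamma>. \<Prod>k<N. intervention_weight (A k) (I k) (L k) (\<gamma> k)"
  have om: "\<omega> \<in> Pi\<^sub>E {..<N} Q \<rightarrow> Pi\<^sub>E {..<N} I"
    using pf unfolding process_function_def by auto
  have finG: "finite (Pi\<^sub>E {..<N} G)"
    unfolding G_def using fin finIQ by (auto intro!: finite_PiE)
  have "(\<Sum>\<gamma>\<in>Pi\<^sub>E {..<N} G. ?w \<gamma>) = (\<Prod>k<N. \<Sum>g\<in>G k. intervention_weight (A k) (I k) (L k) g)"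
    using fin finIQ unfolding G_def by (subst prod_sum_PiE) (auto intro!: finite_PiE)
  also have "\<dots> = 1"
    unfolding G_def using fin finIQ li by (intro prod.neutral ballI sum_intervention_weight) auto
  finally have w1: "(\<Sum>\<gamma>\<in>Pi\<^sub>E {..<N} G. ?w \<gamma>) = 1" .
  have "0 \<le> ?w \<gamma>" if "\<gamma> \<in> Pi\<^sub>E {..<N} G" for \<gamma>
    using that li unfolding G_def by (auto intro!: prod_nonneg intervention_weight_nonneg)
  moreover have "compose N A X I Q (\<lambda>k. det_intervention (\<gamma> k)) (delta_process N Q \<omega>)
      \<in> DC N A X \<inter> {p. deterministic_correlation N A X p}" if "\<gamma> \<in> Pi\<^sub>E {..<N} G" for \<gamma>
    using that unfolding G_def
    by (intro compose_det_intervention_deterministic[OF fin finIQ pf]) (auto simp: PiE_iff)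
  ultimately show ?thesis
    unfolding compose_delta_det_mixture[OF fin finIQ om li G_def]
    by (intro convex_sum[OF finG convex_convex_hull w1]) (auto intro: hull_inc)
qed

lemma DC_subset_hull_deterministic:
  fixes A :: "nat \<Rightarrow> 'a set" and X :: "nat \<Rightarrow> 'x set"
  assumes fin: "\<forall>k<N. finite (A k) \<and> finite (X k)"
  shows "DC N A X \<subseteq> convex hull (DC N A X \<inter> {p. deterministic_correlation N A X p})"
proof
  fix p assume "p \<in> DC N A X"
  then obtain I Q L P where finIQ: "\<forall>k<N. finite (I k) \<and> finite (Q k)"
    and li: "\<forall>k<N. local_intervention (A k) (I k) (X k) (Q k) (L k)"
    and P: "P \<in> det_extrema_polytope N I Q" and p: "p = compose N A X I Q L P"
    unfolding DC_def by blast
  have "compose N A X I Q L ` {delta_process N Q \<omega> | \<omega>. process_function N I Q \<omega>}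
      \<subseteq> convex hull (DC N A X \<inter> {p. deterministic_correlation N A X p})"
    using compose_delta_in_hull_deterministic[OF fin finIQ _ li] by blast
  then have "convex hull (compose N A X I Q L ` {delta_process N Q \<omega> | \<omega>. process_function N I Q \<omega>})
      \<subseteq> convex hull (DC N A X \<inter> {p. deterministic_correlation N A X p})"
    by (simp add: convex_hull_subset)
  then show "p \<in> convex hull (DC N A X \<inter> {p. deterministic_correlation N A X p})"
    using P unfolding p det_extrema_polytope_def convex_hull_linear_image[OF linear_compose, symmetric]
    by blast
qed

section \<open>Convexity by gluing scenarios\<close>

lemma two_mul_add_mod_div:
  fixes b n :: nat
  assumes "b < 2"
  shows "(2 * n + b) mod 2 = b" and "(2 * n + b) div 2 = n"
  using assms by auto

definition embed_parity :: "nat \<Rightarrow> nat \<Rightarrow> (nat \<Rightarrow> nat) \<Rightarrow> nat \<Rightarrow> nat" where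
  "embed_parity N b j = restrict (\<lambda>k. 2 * j k + b) {..<N}"

lemma embed_parity_PiE:
  assumes hS: "\<forall>k<N. {i \<in> S k. i mod 2 = b} = (\<lambda>n. 2 * n + b) ` Sb k" and b: "b < 2"
  shows "{i \<in> Pi\<^sub>E {..<N} S. \<forall>k<N. i k mod 2 = b} = embed_parity N b ` Pi\<^sub>E {..<N} Sb"
    and "inj_on (embed_parity N b) (Pi\<^sub>E {..<N} Sb)"
    and "\<And>j. j \<in> Pi\<^sub>E {..<N} Sb \<Longrightarrow> restrict (\<lambda>k. embed_parity N b j k div 2) {..<N} = j"
    and "\<And>j. j \<in> Pi\<^sub>E {..<N} Sb \<Longrightarrow> embed_parity N b j \<in> Pi\<^sub>E {..<N} S"
proof -
  have mem: "2 * n + b \<in> S k" if "k < N" "n \<in> Sb k" for k n using hS that by blast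
  note md = two_mul_add_mod_div(1)[OF b] and dv = two_mul_add_mod_div(2)[OF b]
  show inS: "embed_parity N b j \<in> Pi\<^sub>E {..<N} S" if "j \<in> Pi\<^sub>E {..<N} Sb" for j
    using that mem unfolding embed_parity_def by (auto simp: PiE_iff)
  show unembed: "restrict (\<lambda>k. embed_parity N b j k div 2) {..<N} = j" if j: "j \<in> Pi\<^sub>E {..<N} Sb" for j
  proof
    fix k show "restrict (\<lambda>k. embed_parity N b j k div 2) {..<N} k = j k"
      using j dv by (cases "k < N") (auto simp: embed_parity_def PiE_iff extensional_def)
  qed
  show "inj_on (embed_parity N b) (Pi\<^sub>E {..<N} Sb)"
    by (rule inj_on_inverseI[of _ "\<lambda>i. restrict (\<lambda>k. i k div 2) {..<N}"]) (rule unembed)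
  show "{i \<in> Pi\<^sub>E {..<N} S. \<forall>k<N. i k mod 2 = b} = embed_parity N b ` Pi\<^sub>E {..<N} Sb"
  proof (intro set_eqI iffI)
    fix i assume "i \<in> {i \<in> Pi\<^sub>E {..<N} S. \<forall>k<N. i k mod 2 = b}"
    then have i: "i \<in> Pi\<^sub>E {..<N} S" and t: "\<forall>k<N. i k mod 2 = b" by auto
    define j where "j = restrict (\<lambda>k. i k div 2) {..<N}"
    have "i k div 2 \<in> Sb k" if k: "k < N" for k
    proof -
      have "i k \<in> {i \<in> S k. i mod 2 = b}" using i t k by (auto simp: PiE_iff)
      then obtain n where "n \<in> Sb k" "i k = 2 * n + b" using hS k by blast
      then show ?thesis using dv by simp
    qed
    then have jS: "j \<in> Pi\<^sub>E {..<N} Sb" unfolding j_def by (auto simp: PiE_iff)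
    have "embed_parity N b j = i"
    proof
      fix k show "embed_parity N b j k = i k"
        using i t by (cases "k < N")
          (auto simp: embed_parity_def j_def PiE_iff extensional_def intro: mult_div_mod_eq)
    qed
    then show "i \<in> embed_parity N b ` Pi\<^sub>E {..<N} Sb" using jS by blast
  next
    fix i assume "i \<in> embed_parity N b ` Pi\<^sub>E {..<N} Sb"
    then obtain j where j: "j \<in> Pi\<^sub>E {..<N} Sb" and i: "i = embed_parity N b j" by blast
    show "i \<in> {i \<in> Pi\<^sub>E {..<N} S. \<forall>k<N. i k mod 2 = b}"
      using inS[OF j] md unfolding i by (simp add: embed_parity_def)
  qed
qed

lemma sum_PiE_parity_class:
  assumes hS: "\<forall>k<N. {i \<in> S k. i mod 2 = b} = (\<lambda>n. 2 * n + b) ` Sb k" and b: "b < 2"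
    and fin: "\<forall>k<N. finite (S k)"
    and vanish: "\<And>i. i \<in> Pi\<^sub>E {..<N} S \<Longrightarrow> \<not> (\<forall>k<N. i k mod 2 = b) \<Longrightarrow> F i = 0"
  shows "(\<Sum>i\<in>Pi\<^sub>E {..<N} S. F i) = (\<Sum>j\<in>Pi\<^sub>E {..<N} Sb. F (embed_parity N b j))"
proof -
  note emb = embed_parity_PiE[OF hS b]
  have "(\<Sum>i\<in>Pi\<^sub>E {..<N} S. F i) = (\<Sum>i\<in>{i \<in> Pi\<^sub>E {..<N} S. \<forall>k<N. i k mod 2 = b}. F i)"
    using fin vanish by (intro sum.mono_neutral_right finite_PiE) auto
  also have "\<dots> = (\<Sum>j\<in>Pi\<^sub>E {..<N} Sb. F (embed_parity N b j))"
    unfolding emb(1) by (rule sum.reindex[OF emb(2), unfolded comp_def])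
  finally show ?thesis .
qed

lemma embed_parity_iff:
  assumes hS: "\<forall>k<N. {i \<in> S k. i mod 2 = b} = (\<lambda>n. 2 * n + b) ` Sb k" and b: "b < 2"
    and w: "w \<in> Pi\<^sub>E {..<N} Sb"
  shows "i \<in> Pi\<^sub>E {..<N} S \<and> (\<forall>k<N. i k mod 2 = b) \<and> restrict (\<lambda>k. i k div 2) {..<N} = w
     \<longleftrightarrow> i = embed_parity N b w"
proof
  note emb = embed_parity_PiE[OF hS b]
  assume h: "i \<in> Pi\<^sub>E {..<N} S \<and> (\<forall>k<N. i k mod 2 = b) \<and> restrict (\<lambda>k. i k div 2) {..<N} = w"
  then have "i \<in> {i \<in> Pi\<^sub>E {..<N} S. \<forall>k<N. i k mod 2 = b}" by blast
  then obtain j where j: "j \<in> Pi\<^sub>E {..<N} Sb" and ij: "i = embed_parity N b j"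
    unfolding emb(1) by (rule imageE)
  have "j = w" using h emb(3)[OF j] unfolding ij by simp
  then show "i = embed_parity N b w" using ij by simp
next
  assume i: "i = embed_parity N b w"
  have "\<forall>k<N. embed_parity N b w k mod 2 = b"
    using two_mul_add_mod_div(1)[OF b] by (simp add: embed_parity_def)
  then show "i \<in> Pi\<^sub>E {..<N} S \<and> (\<forall>k<N. i k mod 2 = b) \<and> restrict (\<lambda>k. i k div 2) {..<N} = w"
    using embed_parity_PiE(3,4)[OF hS b w] unfolding i by blast
qed

text \<open>Outputs of the wrong parity are read as the default output \<open>d\<close>, so that the lift of a
  process is again a process on all outputs.\<close>

definition lift_process :: "nat \<Rightarrow> (nat \<Rightarrow> nat set) \<Rightarrow> (nat \<Rightarrow> nat set) \<Rightarrow> nat \<Rightarrow> (nat \<Rightarrow> nat)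
    \<Rightarrow> ((nat \<Rightarrow> nat) \<Rightarrow> (nat \<Rightarrow> nat) \<Rightarrow> real) \<Rightarrow> (nat \<Rightarrow> nat) \<Rightarrow> (nat \<Rightarrow> nat) \<Rightarrow> real" where
  "lift_process N I Q b d P = (\<lambda>i u.
     if u \<in> Pi\<^sub>E {..<N} Q \<and> i \<in> Pi\<^sub>E {..<N} I \<and> (\<forall>k<N. i k mod 2 = b)
     then P (restrict (\<lambda>k. i k div 2) {..<N})
            (restrict (\<lambda>k. if u k mod 2 = b then u k div 2 else d k) {..<N})
     else 0)"

lemma linear_lift_process: "linear (lift_process N I Q b d)"
  by (rule linearI) (auto simp: lift_process_def fun_eq_iff plus_fun_def scaleR_fun_def)

lemma lift_process_embed:
  assumes hI: "\<forall>k<N. {i \<in> I k. i mod 2 = b} = (\<lambda>n. 2 * n + b) ` Ib k"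
    and hQ: "\<forall>k<N. {i \<in> Q k. i mod 2 = b} = (\<lambda>n. 2 * n + b) ` Qb k" and b: "b < 2"
    and j: "j \<in> Pi\<^sub>E {..<N} Ib" and w: "w \<in> Pi\<^sub>E {..<N} Qb"
  shows "lift_process N I Q b d P (embed_parity N b j) (embed_parity N b w) = P j w"
proof -
  note md = two_mul_add_mod_div(1)[OF b]
  have "(\<lambda>k\<in>{..<N}. if embed_parity N b w k mod 2 = b then embed_parity N b w k div 2 else d k)
      = (\<lambda>k\<in>{..<N}. embed_parity N b w k div 2)"
    using md by (intro restrict_ext) (simp add: embed_parity_def)
  then show ?thesis
    using embed_parity_PiE(3,4)[OF hI b j] embed_parity_PiE(3,4)[OF hQ b w] md
    unfolding lift_process_def by (simp add: embed_parity_def)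
qed

lemma compose_lift_process:
  assumes hI: "\<forall>k<N. {i \<in> I k. i mod 2 = b} = (\<lambda>n. 2 * n + b) ` Ib k"
    and hQ: "\<forall>k<N. {i \<in> Q k. i mod 2 = b} = (\<lambda>n. 2 * n + b) ` Qb k" and b: "b < 2"
    and hL: "\<And>k a i x v. i mod 2 = b \<Longrightarrow>
               L k a i x v = (if v mod 2 = b then Lb k a (i div 2) x (v div 2) else 0)"
    and finIQ: "\<forall>k<N. finite (I k) \<and> finite (Q k)"
  shows "compose N A X I Q L (lift_process N I Q b d P) = compose N A X Ib Qb Lb P"
proof (intro ext)
  fix a x
  show "compose N A X I Q L (lift_process N I Q b d P) a x = compose N A X Ib Qb Lb P a x"
  proof (cases "a \<in> Pi\<^sub>E {..<N} A \<and> x \<in> Pi\<^sub>E {..<N} X")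
    case True
    define F where "F i u = (\<Prod>k<N. L k (a k) (i k) (x k) (u k)) * lift_process N I Q b d P i u" for i u
    note md = two_mul_add_mod_div(1)[OF b] and dv = two_mul_add_mod_div(2)[OF b]
    have vanish_i: "F i u = 0" if "\<not> (\<forall>k<N. i k mod 2 = b)" for i u
    proof -
      have "\<not> (u \<in> Pi\<^sub>E {..<N} Q \<and> i \<in> Pi\<^sub>E {..<N} I \<and> (\<forall>k<N. i k mod 2 = b))"
        using that by blast
      then show ?thesis
        unfolding F_def lift_process_def by (simp only: if_not_P if_False mult_zero_right)
    qed
    have vanish: "F (embed_parity N b j) u = 0"
      if "\<not> (\<forall>k<N. u k mod 2 = b)" for j u
    proof -
      obtain k where "k < N" "u k mod 2 \<noteq> b" using \<open>\<not> (\<forall>k<N. u k mod 2 = b)\<close> by blast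
      then show ?thesis
        unfolding F_def using hL md by (auto simp: embed_parity_def intro!: prod_zero)
    qed
    have inner: "(\<Sum>u\<in>Pi\<^sub>E {..<N} Q. F (embed_parity N b j) u)
        = (\<Sum>w\<in>Pi\<^sub>E {..<N} Qb. F (embed_parity N b j) (embed_parity N b w))" for j
      by (rule sum_PiE_parity_class[OF hQ b]) (use finIQ vanish in auto)
    have "(\<Sum>i\<in>Pi\<^sub>E {..<N} I. \<Sum>u\<in>Pi\<^sub>E {..<N} Q. F i u)
        = (\<Sum>j\<in>Pi\<^sub>E {..<N} Ib. \<Sum>u\<in>Pi\<^sub>E {..<N} Q. F (embed_parity N b j) u)"
      by (rule sum_PiE_parity_class[OF hI b]) (use finIQ vanish_i in auto)
    also have "\<dots> = (\<Sum>j\<in>Pi\<^sub>E {..<N} Ib. \<Sum>w\<in>Pi\<^sub>E {..<N} Qb. F (embed_parity N b j) (embed_parity N b w))"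
      by (simp only: inner)
    also have "\<dots> = (\<Sum>j\<in>Pi\<^sub>E {..<N} Ib. \<Sum>w\<in>Pi\<^sub>E {..<N} Qb. (\<Prod>k<N. Lb k (a k) (j k) (x k) (w k)) * P j w)"
    proof (intro sum.cong refl)
      fix j w assume j: "j \<in> Pi\<^sub>E {..<N} Ib" and w: "w \<in> Pi\<^sub>E {..<N} Qb"
      have "lift_process N I Q b d P (embed_parity N b j) (embed_parity N b w) = P j w"
        by (rule lift_process_embed[OF hI hQ b j w])
      moreover have "(\<Prod>k<N. L k (a k) (embed_parity N b j k) (x k) (embed_parity N b w k))
          = (\<Prod>k<N. Lb k (a k) (j k) (x k) (w k))"
        using hL md dv by (intro prod.cong refl) (simp add: embed_parity_def)
      ultimately show "F (embed_parity N b j) (embed_parity N b w) = (\<Prod>k<N. Lb k (a k) (j k) (x k) (w k)) * P j w"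
        unfolding F_def by simp
    qed
    finally show ?thesis using True unfolding compose_def F_def by simp
  qed simp
qed

lemma lift_process_delta:
  assumes hI: "\<forall>k<N. {i \<in> I k. i mod 2 = b} = (\<lambda>n. 2 * n + b) ` Ib k"
    and hQ: "\<forall>k<N. {i \<in> Q k. i mod 2 = b} = (\<lambda>n. 2 * n + b) ` Qb k" and b: "b < 2"
    and finIQ: "\<forall>k<N. finite (I k) \<and> finite (Q k)"
    and pf: "process_function N Ib Qb \<omega>" and d: "\<forall>k<N. d k \<in> Qb k"
  shows "\<exists>\<omega>'. process_function N I Q \<omega>' \<and> lift_process N I Q b d (delta_process N Qb \<omega>) = delta_process N Q \<omega>'"
proof -
  define \<pi> where "\<pi> k v = (if v mod 2 = b then v div 2 else d k)" for k v :: nat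
  define pu where "pu u = restrict (\<lambda>k. \<pi> k (u k)) {..<N}" for u :: "nat \<Rightarrow> nat"
  define \<omega>' where "\<omega>' = (\<lambda>u. restrict (\<lambda>k. 2 * \<omega> (pu u) k + b) {..<N})"
  note dv = two_mul_add_mod_div(2)[OF b]
  have \<pi>: "\<forall>k<N. \<forall>v\<in>Q k. \<pi> k v \<in> Qb k"
  proof (intro allI impI ballI)
    fix k v assume k: "k < N" and v: "v \<in> Q k"
    show "\<pi> k v \<in> Qb k"
    proof (cases "v mod 2 = b")
      case True
      then obtain n where "n \<in> Qb k" "v = 2 * n + b" using hQ k v by blast
      then show ?thesis using True dv unfolding \<pi>_def by simp
    qed (use d k in \<open>simp add: \<pi>_def\<close>)
  qed
  have "\<forall>k<N. \<forall>n\<in>Ib k. 2 * n + b \<in> I k" using hI by blast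
  from process_function_relabel[OF pf finIQ \<pi> this]
  have pf': "process_function N I Q \<omega>'"
    unfolding \<omega>'_def pu_def .
  have om: "\<omega> \<in> Pi\<^sub>E {..<N} Qb \<rightarrow> Pi\<^sub>E {..<N} Ib" using pf unfolding process_function_def by auto
  have "lift_process N I Q b d (delta_process N Qb \<omega>) i u = delta_process N Q \<omega>' i u" for i u
  proof (cases "u \<in> Pi\<^sub>E {..<N} Q")
    case True
    have puin: "pu u \<in> Pi\<^sub>E {..<N} Qb" using True \<pi> unfolding pu_def by (auto simp: PiE_iff)
    then have wq: "\<omega> (pu u) \<in> Pi\<^sub>E {..<N} Ib" by (rule funcset_mem[OF om])
    have o': "\<omega>' u = embed_parity N b (\<omega> (pu u))" unfolding \<omega>'_def embed_parity_def by simp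
    note iff = embed_parity_iff[OF hI b wq, of i]
    have "lift_process N I Q b d (delta_process N Qb \<omega>) i u
        = (if i \<in> Pi\<^sub>E {..<N} I \<and> (\<forall>k<N. i k mod 2 = b) \<and> restrict (\<lambda>k. i k div 2) {..<N} = \<omega> (pu u)
           then 1 else 0)"
      unfolding lift_process_def delta_process_def using True puin unfolding pu_def \<pi>_def by auto
    also have "\<dots> = delta_process N Q \<omega>' i u"
      unfolding iff delta_process_def o' using True by simp
    finally show ?thesis .
  qed (simp add: lift_process_def delta_process_def)
  then have "lift_process N I Q b d (delta_process N Qb \<omega>) = delta_process N Q \<omega>'"
    by (intro ext)
  with pf' show ?thesis by blast
qed

lemma lift_process_det_extrema_polytope:
  assumes hI: "\<forall>k<N. {i \<in> I k. i mod 2 = b} = (\<lambda>n. 2 * n + b) ` Ib k"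
    and hQ: "\<forall>k<N. {i \<in> Q k. i mod 2 = b} = (\<lambda>n. 2 * n + b) ` Qb k" and b: "b < 2"
    and finIQ: "\<forall>k<N. finite (I k) \<and> finite (Q k)"
    and d: "\<forall>k<N. d k \<in> Qb k" and P: "P \<in> det_extrema_polytope N Ib Qb"
  shows "lift_process N I Q b d P \<in> det_extrema_polytope N I Q"
proof -
  have "lift_process N I Q b d ` {delta_process N Qb \<omega> | \<omega>. process_function N Ib Qb \<omega>}
      \<subseteq> {delta_process N Q \<omega> | \<omega>. process_function N I Q \<omega>}"
    using lift_process_delta[OF hI hQ b finIQ _ d] by blast
  then have "convex hull (lift_process N I Q b d ` {delta_process N Qb \<omega> | \<omega>. process_function N Ib Qb \<omega>})
      \<subseteq> det_extrema_polytope N I Q"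
    unfolding det_extrema_polytope_def by (rule hull_mono)
  then show ?thesis
    using P unfolding det_extrema_polytope_def convex_hull_linear_image[OF linear_lift_process, symmetric]
    by blast
qed

definition merge_sets :: "nat set \<Rightarrow> nat set \<Rightarrow> nat set" where
  "merge_sets S1 S2 = (\<lambda>n. 2 * n) ` S1 \<union> (\<lambda>n. 2 * n + 1) ` S2"

definition merge_interventions ::
  "('a \<Rightarrow> nat \<Rightarrow> 'x \<Rightarrow> nat \<Rightarrow> real) \<Rightarrow> ('a \<Rightarrow> nat \<Rightarrow> 'x \<Rightarrow> nat \<Rightarrow> real) \<Rightarrow> 'a \<Rightarrow> nat \<Rightarrow> 'x \<Rightarrow> nat \<Rightarrow> real"
where
  "merge_interventions L1 L2 a i x v =
     (if i mod 2 \<noteq> v mod 2 then 0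
      else if i mod 2 = 0 then L1 a (i div 2) x (v div 2) else L2 a (i div 2) x (v div 2))"

lemma merge_sets_even: "{i \<in> merge_sets S1 S2. i mod 2 = 0} = (\<lambda>n. 2 * n + 0) ` S1"
  unfolding merge_sets_def by auto

lemma merge_sets_odd: "{i \<in> merge_sets S1 S2. i mod 2 = 1} = (\<lambda>n. 2 * n + 1) ` S2"
  unfolding merge_sets_def by auto

lemma merge_interventions_even:
  "i mod 2 = 0 \<Longrightarrow>
     merge_interventions L1 L2 a i x v = (if v mod 2 = 0 then L1 a (i div 2) x (v div 2) else 0)"
  unfolding merge_interventions_def by auto

lemma merge_interventions_odd:
  "i mod 2 = 1 \<Longrightarrow>
     merge_interventions L1 L2 a i x v = (if v mod 2 = 1 then L2 a (i div 2) x (v div 2) else 0)"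
  unfolding merge_interventions_def by auto

lemma local_intervention_parity_part:
  fixes b :: nat
  assumes hQ: "{v \<in> Q. v mod 2 = b} = (\<lambda>n. 2 * n + b) ` Qb" and b: "b < 2" and fQ: "finite Q"
    and hL: "\<And>x v. L a i x v = (if v mod 2 = b then Lb a (i div 2) x (v div 2) else 0)"
    and lib: "local_intervention A Ib X Qb Lb" and a: "a \<in> A" and i: "i div 2 \<in> Ib"
  shows "(\<forall>x\<in>X. \<forall>v\<in>Q. 0 \<le> L a i x v) \<and> (\<Sum>(x, v)\<in>X \<times> Q. L a i x v) = 1"
proof
  have dv: "(2 * n + b) div 2 = n" for n using b by simp
  have Lb: "\<forall>x\<in>X. \<forall>u\<in>Qb. 0 \<le> Lb a (i div 2) x u" "(\<Sum>(x, u)\<in>X \<times> Qb. Lb a (i div 2) x u) = 1"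
    using lib a i unfolding local_intervention_def by blast+
  have "v div 2 \<in> Qb" if v: "v \<in> Q" "v mod 2 = b" for v
  proof -
    obtain n where "n \<in> Qb" "v = 2 * n + b" using hQ v by blast
    then show ?thesis using dv by simp
  qed
  then show "\<forall>x\<in>X. \<forall>v\<in>Q. 0 \<le> L a i x v"
    using hL Lb(1) by auto
  have inj: "inj_on (\<lambda>n. 2 * n + b) Qb" by (rule inj_onI) simp
  have "(\<Sum>(x, v)\<in>X \<times> Q. L a i x v) = (\<Sum>x\<in>X. \<Sum>v\<in>Q. L a i x v)"
    by (simp add: sum.cartesian_product)
  also have "\<dots> = (\<Sum>x\<in>X. \<Sum>v\<in>Q. if v mod 2 = b then Lb a (i div 2) x (v div 2) else 0)"
    using hL by simp
  also have "\<dots> = (\<Sum>x\<in>X. \<Sum>v\<in>{v \<in> Q. v mod 2 = b}. Lb a (i div 2) x (v div 2))"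
    using fQ by (simp add: sum.inter_filter)
  also have "\<dots> = (\<Sum>x\<in>X. \<Sum>n\<in>Qb. Lb a (i div 2) x n)"
    unfolding hQ by (subst sum.reindex[OF inj]) (simp add: dv)
  also have "\<dots> = 1" using Lb(2) by (simp add: sum.cartesian_product)
  finally show "(\<Sum>(x, v)\<in>X \<times> Q. L a i x v) = 1" .
qed

lemma local_intervention_merge:
  assumes li1: "local_intervention A I1 X Q1 L1" and li2: "local_intervention A I2 X Q2 L2"
    and fin: "finite Q1" "finite Q2"
  shows "local_intervention A (merge_sets I1 I2) X (merge_sets Q1 Q2) (merge_interventions L1 L2)"
  unfolding local_intervention_def
proof (intro ballI)
  fix a i assume a: "a \<in> A" and i: "i \<in> merge_sets I1 I2"
  have finQ: "finite (merge_sets Q1 Q2)" using fin unfolding merge_sets_def by simp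
  show "(\<forall>x\<in>X. \<forall>v\<in>merge_sets Q1 Q2. 0 \<le> merge_interventions L1 L2 a i x v)
      \<and> (\<Sum>(x, v)\<in>X \<times> merge_sets Q1 Q2. merge_interventions L1 L2 a i x v) = 1"
  proof (cases "i mod 2 = 0")
    case True
    then have "i div 2 \<in> I1" using i unfolding merge_sets_def by auto
    with True show ?thesis
      by (intro local_intervention_parity_part[OF merge_sets_even _ finQ _ li1 a])
        (simp_all add: merge_interventions_even)
  next
    case False
    then have odd: "i mod 2 = 1" by presburger
    then have "i div 2 \<in> I2" using i unfolding merge_sets_def by auto
    with odd show ?thesis
      by (intro local_intervention_parity_part[OF merge_sets_odd _ finQ _ li2 a])
        (simp_all add: merge_interventions_odd)
  qed
qed

lemma merge_realisations:
  fixes A :: "nat \<Rightarrow> 'a set" and X :: "nat \<Rightarrow> 'x set"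
  assumes finIQ1: "\<forall>k<N. finite (I1 k) \<and> finite (Q1 k)" and finIQ2: "\<forall>k<N. finite (I2 k) \<and> finite (Q2 k)"
    and li1: "\<forall>k<N. local_intervention (A k) (I1 k) (X k) (Q1 k) (L1 k)"
    and li2: "\<forall>k<N. local_intervention (A k) (I2 k) (X k) (Q2 k) (L2 k)"
    and P1: "P1 \<in> det_extrema_polytope N I1 Q1" and P2: "P2 \<in> det_extrema_polytope N I2 Q2"
    and ne1: "\<forall>k<N. Q1 k \<noteq> {}" and ne2: "\<forall>k<N. Q2 k \<noteq> {}"
  obtains I Q L P1' P2' where "\<forall>k<N. finite (I k) \<and> finite (Q k)"
    and "\<forall>k<N. local_intervention (A k) (I k) (X k) (Q k) (L k)"
    and "P1' \<in> det_extrema_polytope N I Q" and "P2' \<in> det_extrema_polytope N I Q"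
    and "compose N A X I Q L P1' = compose N A X I1 Q1 L1 P1"
    and "compose N A X I Q L P2' = compose N A X I2 Q2 L2 P2"
proof -
  define I where "I k = merge_sets (I1 k) (I2 k)" for k
  define Q where "Q k = merge_sets (Q1 k) (Q2 k)" for k
  define L where "L k = merge_interventions (L1 k) (L2 k)" for k
  define d1 where "d1 k = (SOME q. q \<in> Q1 k)" for k
  define d2 where "d2 k = (SOME q. q \<in> Q2 k)" for k
  have d1: "\<forall>k<N. d1 k \<in> Q1 k" and d2: "\<forall>k<N. d2 k \<in> Q2 k"
    using ne1 ne2 unfolding d1_def d2_def by (simp_all add: some_in_eq)
  have hI1: "\<forall>k<N. {i \<in> I k. i mod 2 = 0} = (\<lambda>n. 2 * n + 0) ` I1 k"
    and hI2: "\<forall>k<N. {i \<in> I k. i mod 2 = 1} = (\<lambda>n. 2 * n + 1) ` I2 k"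
    and hQ1: "\<forall>k<N. {i \<in> Q k. i mod 2 = 0} = (\<lambda>n. 2 * n + 0) ` Q1 k"
    and hQ2: "\<forall>k<N. {i \<in> Q k. i mod 2 = 1} = (\<lambda>n. 2 * n + 1) ` Q2 k"
    unfolding I_def Q_def by (simp_all only: merge_sets_even merge_sets_odd) simp_all
  have finIQ: "\<forall>k<N. finite (I k) \<and> finite (Q k)"
    using finIQ1 finIQ2 unfolding I_def Q_def merge_sets_def by auto
  have li: "\<forall>k<N. local_intervention (A k) (I k) (X k) (Q k) (L k)"
    using li1 li2 finIQ1 finIQ2 unfolding I_def Q_def L_def by (auto intro: local_intervention_merge)
  show ?thesis
  proof (rule that[OF finIQ li])
    show "lift_process N I Q 0 d1 P1 \<in> det_extrema_polytope N I Q"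
      by (rule lift_process_det_extrema_polytope[OF hI1 hQ1 _ finIQ d1 P1]) simp
    show "lift_process N I Q 1 d2 P2 \<in> det_extrema_polytope N I Q"
      by (rule lift_process_det_extrema_polytope[OF hI2 hQ2 _ finIQ d2 P2]) simp
    show "compose N A X I Q L (lift_process N I Q 0 d1 P1) = compose N A X I1 Q1 L1 P1"
      by (rule compose_lift_process[OF hI1 hQ1 _ _ finIQ]) (simp_all add: L_def merge_interventions_even)
    show "compose N A X I Q L (lift_process N I Q 1 d2 P2) = compose N A X I2 Q2 L2 P2"
      by (rule compose_lift_process[OF hI2 hQ2 _ _ finIQ]) (simp_all add: L_def merge_interventions_odd)
  qed
qed

lemma convex_DC:
  fixes A :: "nat \<Rightarrow> 'a set" and X :: "nat \<Rightarrow> 'x set"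
  shows "convex (DC N A X)"
proof (cases "Pi\<^sub>E {..<N} A = {}")
  case True
  then have "DC N A X \<subseteq> {\<lambda>a x. 0}"
    unfolding DC_def using is_correlation_support by (fastforce simp: fun_eq_iff)
  then have "DC N A X = {} \<or> DC N A X = {\<lambda>a x. 0}" by (rule subset_singletonD)
  then show ?thesis by auto
next
  case False
  then obtain a0 where a0: "a0 \<in> Pi\<^sub>E {..<N} A" by blast
  show ?thesis
  proof (rule convexI)
    fix p1 p2 and u v :: real assume p1: "p1 \<in> DC N A X" and p2: "p2 \<in> DC N A X"
      and u: "0 \<le> u" and v: "0 \<le> v" and uv: "u + v = 1"
    obtain I1 Q1 L1 P1 where c1: "is_correlation N A X p1" and finIQ1: "\<forall>k<N. finite (I1 k) \<and> finite (Q1 k)"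
      and li1: "\<forall>k<N. local_intervention (A k) (I1 k) (X k) (Q1 k) (L1 k)"
      and P1: "P1 \<in> det_extrema_polytope N I1 Q1" and e1: "p1 = compose N A X I1 Q1 L1 P1"
      using p1 unfolding DC_def by blast
    obtain I2 Q2 L2 P2 where c2: "is_correlation N A X p2" and finIQ2: "\<forall>k<N. finite (I2 k) \<and> finite (Q2 k)"
      and li2: "\<forall>k<N. local_intervention (A k) (I2 k) (X k) (Q2 k) (L2 k)"
      and P2: "P2 \<in> det_extrema_polytope N I2 Q2" and e2: "p2 = compose N A X I2 Q2 L2 P2"
      using p2 unfolding DC_def by blast
    obtain I Q L P1' P2' where finIQ: "\<forall>k<N. finite (I k) \<and> finite (Q k)"
      and li: "\<forall>k<N. local_intervention (A k) (I k) (X k) (Q k) (L k)"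
      and P1': "P1' \<in> det_extrema_polytope N I Q" and P2': "P2' \<in> det_extrema_polytope N I Q"
      and e1': "compose N A X I Q L P1' = p1" and e2': "compose N A X I Q L P2' = p2"
      using merge_realisations[OF finIQ1 finIQ2 li1 li2 P1 P2
          is_correlation_compose_outputs_nonempty[OF c1[unfolded e1] a0]
          is_correlation_compose_outputs_nonempty[OF c2[unfolded e2] a0]]
      unfolding e1 e2 by blast
    have Pin: "u *\<^sub>R P1' + v *\<^sub>R P2' \<in> det_extrema_polytope N I Q"
      using P1' P2' u v uv unfolding det_extrema_polytope_def by (intro convexD convex_convex_hull)
    have eq: "compose N A X I Q L (u *\<^sub>R P1' + v *\<^sub>R P2') = u *\<^sub>R p1 + v *\<^sub>R p2"
      by (simp add: linear_add[OF linear_compose] linear_scale[OF linear_compose] e1' e2')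
    have "u *\<^sub>R p1 + v *\<^sub>R p2 \<in> {p. is_correlation N A X p}"
      by (rule convexD[OF convex_is_correlation]) (use c1 c2 u v uv in simp_all)
    then have "is_correlation N A X (compose N A X I Q L (u *\<^sub>R P1' + v *\<^sub>R P2'))"
      unfolding eq by simp
    from compose_in_DC[OF this finIQ li Pin]
    show "u *\<^sub>R p1 + v *\<^sub>R p2 \<in> DC N A X" unfolding eq .
  qed
qed

theorem mainTheorem6:
  fixes N :: nat and A :: "nat \<Rightarrow> 'a set" and X :: "nat \<Rightarrow> 'x set"
  assumes "\<forall>k<N. finite (A k) \<and> finite (X k)"
  shows "convex (DC N A X)
    \<and> DC N A X = convex hull (DC N A X \<inter> {p. deterministic_correlation N A X p})
    \<and> polytope (DC N A X)
    \<and> (\<forall>p. p extreme_point_of (DC N A X) \<longrightarrow> deterministic_correlation N A X p)"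
proof -
  let ?D = "DC N A X \<inter> {p. deterministic_correlation N A X p}"
  have "convex hull ?D \<subseteq> DC N A X"
    by (rule hull_minimal) (simp_all add: convex_DC)
  with DC_subset_hull_deterministic[OF assms] have hull: "DC N A X = convex hull ?D"
    by (rule subset_antisym)
  moreover have "finite ?D"
    using finite_deterministic_correlations[OF assms] by (rule finite_subset[OF Int_lower2])
  ultimately have "polytope (DC N A X)"
    unfolding polytope_def by blast
  moreover have "deterministic_correlation N A X p" if "p extreme_point_of (DC N A X)" for p
  proof -
    have "p extreme_point_of (convex hull ?D)"
      using that by (simp only: hull[symmetric])
    then show ?thesis by (blast dest: extreme_point_of_convex_hull)
  qed
  ultimately show ?thesis
    using convex_DC hull by blast
qed

end
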